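(* Let $(\Omega,\mathcal F,P)$ be a probability space and $T:\Omega\to\Omega$ a measurable transformation preserving $P$ such that $(\Omega,\mathcal F,P,T)$ is ergodic. Let $b:\Omega\to\mathbb R$ and $r:\Omega\to(0,\infty)$ be random variables, and for $\omega\in\Omega$ let $\varphi_\omega(y)=b(\omega)+r(\omega)y$, $y\in\mathbb R$. Assume that the set $S=\{\varphi_\omega:\omega\in\Omega\}$ of affine maps is countable, with $P(\varphi_\omega=\varphi)>0$ for every $\varphi\in S$, that $b\in L^1(P)$, $\log r\in L^1(P)$ and $\int_\Omega\log r\,dP<0$. Set $r_0(\omega)=1$, $r_n(\omega)=r(\omega)r(T\omega)\cdots r(T^{n-1}\omega)$ for $n\ge1$, and define the (almost everywhere defined) random variable $$X(\omega)=\sum_{n\ge0}r_n(\omega)\,b(T^n\omega).$$ Let $P_X$ be the law of $X$ on $(\mathbb R,\mathcal B(\mathbb R))$, i.e. $P_X(A)=P(X^{-1}(A))$. Then $P_X$ is of pure type: it is either purely atomic, or absolutely continuous with respect to Lebesgue measure, or continuous and singular with respect to Lebesgue measure.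
   Context: Lebesgue measure on $\mathbb R$ is denoted $Leb$. *)

theory Defs
  imports "HOL-Probability.Probability"
begin

definition measure_preserving_map :: "'a measure \<Rightarrow> ('a \<Rightarrow> 'a) \<Rightarrow> bool" where
  "measure_preserving_map M T \<longleftrightarrow> T \<in> measurable M M \<and> distr M M T = M"

definition ergodic :: "'a measure \<Rightarrow> ('a \<Rightarrow> 'a) \<Rightarrow> bool" where
  "ergodic M T \<longleftrightarrow> measure_preserving_map M T \<and>
     (\<forall>A \<in> sets M. T -` A \<inter> space M = A \<longrightarrow>
        measure M A = 0 \<or> measure M A = 1)"

definition rprod :: "('a \<Rightarrow> 'a) \<Rightarrow> ('a \<Rightarrow> real) \<Rightarrow> nat \<Rightarrow> 'a \<Rightarrow> real" where
  "rprod T r n w = (\<Prod>i<n. r ((T ^^ i) w))"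

text \<open>X(w) = sum_n r_n(w) b(T^n w); set to 0 where the series does not converge
  (a null set under the hypotheses).\<close>
definition Xrv :: "('a \<Rightarrow> 'a) \<Rightarrow> ('a \<Rightarrow> real) \<Rightarrow> ('a \<Rightarrow> real) \<Rightarrow> 'a \<Rightarrow> real" where
  "Xrv T b r w = (if summable (\<lambda>n. rprod T r n w * b ((T ^^ n) w))
                  then (\<Sum>n. rprod T r n w * b ((T ^^ n) w)) else 0)"

definition purely_atomic :: "real measure \<Rightarrow> bool" where
  "purely_atomic \<mu> \<longleftrightarrow> (\<exists>C. countable C \<and> emeasure \<mu> (UNIV - C) = 0)"

definition continuous_measure :: "real measure \<Rightarrow> bool" where
  "continuous_measure \<mu> \<longleftrightarrow> (\<forall>x. emeasure \<mu> {x} = 0)"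

definition singular_lebesgue :: "real measure \<Rightarrow> bool" where
  "singular_lebesgue \<mu> \<longleftrightarrow>
     (\<exists>A \<in> sets borel. emeasure lborel A = 0 \<and> emeasure \<mu> (UNIV - A) = 0)"

end

theory Submission
  imports Defs
begin

text \<open>Where the series defining X converges, X w = b w + r w * X (T w); where it diverges, it
  also diverges at T w, and X vanishes at both points. Hence, if B is a Borel set and B' is the
  set of points that some finite composition of maps \<open>\<phi>\<^sub>w\<close> sends into B, the event
  \<open>X \<in> B'\<close> is forward invariant under T, and by ergodicity it has probability 0 or 1,
  namely 1 as soon as \<open>P\<^sub>X(B) > 0\<close>. Since there are only countably many
  maps \<open>\<phi>\<^sub>w\<close> and they are invertible affine maps, B' is countable when B is a
  point and Lebesgue null when B is. So either \<open>P\<^sub>X\<close> has an atom and is then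
  purely atomic, or it is continuous and, unless absolutely continuous, charges a Lebesgue null
  set and is then singular.\<close>

lemma ergodic_forward_invariant:
  assumes "ergodic M T" and E[measurable]: "E \<in> sets M" and invariant: "\<And>w. w \<in> E \<Longrightarrow> T w \<in> E"
  shows "measure M E = 0 \<or> measure M E = 1"
proof -
  have T[measurable]: "T \<in> M \<rightarrow>\<^sub>M M" and preserving: "distr M M T = M"
    and ergodic: "\<And>A. A \<in> sets M \<Longrightarrow> T -` A \<inter> space M = A \<Longrightarrow> measure M A = 0 \<or> measure M A = 1"
    using assms(1) by (auto simp: ergodic_def measure_preserving_map_def)
  \<comment> \<open>E itself need not be invariant, but the union of its preimages is, and has the same measure.\<close>
  define A where "A n = (T ^^ n) -` E \<inter> space M" for n
  have A_sets[measurable]: "A n \<in> sets M" for n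
    unfolding A_def by measurable
  have A_Suc: "T -` A n \<inter> space M = A (Suc n)" for n
    using measurable_space[OF T] by (auto simp: A_def funpow_Suc_right simp del: funpow.simps)
  have A_measure: "emeasure M (A n) = emeasure M E" for n
  proof (induction n)
    case 0
    show ?case using sets.sets_into_space[OF E] by (simp add: A_def Int_absorb2)
  next
    case (Suc n)
    have "emeasure M (A (Suc n)) = emeasure (distr M M T) (A n)"
      by (simp add: emeasure_distr A_Suc)
    then show ?case using preserving Suc by simp
  qed
  have "incseq A"
    unfolding incseq_Suc_iff A_def using invariant by auto
  define F where "F = (\<Union>n. A n)"
  have F_sets: "F \<in> sets M"
    unfolding F_def by measurable
  have "emeasure M F = (SUP n. emeasure M (A n))"
    using SUP_emeasure_incseq[of A M] A_sets \<open>incseq A\<close> by (simp add: F_def image_subset_iff)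
  then have "measure M F = measure M E"
    by (simp add: A_measure measure_def)
  moreover have "T -` F \<inter> space M = F"
  proof -
    have "T -` F \<inter> space M = (\<Union>n. A (Suc n))"
      by (auto simp: F_def A_Suc[symmetric])
    also have "\<dots> = F"
      using \<open>incseq A\<close> by (auto simp: F_def incseq_Suc_iff intro: UN_I[of "Suc _"])
    finally show ?thesis .
  qed
  ultimately show ?thesis
    using ergodic[OF F_sets] by simp
qed

lemma rprod_Suc_shift: "rprod T r (Suc n) w = r w * rprod T r n (T w)"
  unfolding rprod_def
  by (simp add: prod.lessThan_Suc_shift funpow_Suc_right del: funpow.simps prod.lessThan_Suc)

lemma Xrv_shift_cases:
  assumes "r w \<noteq> 0"
  shows "Xrv T b r w = b w + r w * Xrv T b r (T w) \<or> (Xrv T b r w = 0 \<and> Xrv T b r (T w) = 0)"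
proof -
  define f where "f n = rprod T r n w * b ((T ^^ n) w)" for n
  define g where "g n = rprod T r n (T w) * b ((T ^^ n) (T w))" for n
  have f_Suc: "f (Suc n) = r w * g n" for n
    by (simp add: f_def g_def rprod_Suc_shift funpow_Suc_right del: funpow.simps)
  have summable_iff: "summable f \<longleftrightarrow> summable g"
    using summable_Suc_iff[of f] summable_cmult_iff[of "r w" g] assms by (simp add: f_Suc)
  show ?thesis
  proof (cases "summable g")
    case True
    then have "suminf f = f 0 + r w * suminf g"
      using suminf_split_head[of f] suminf_mult[of g "r w"] summable_iff by (simp add: f_Suc)
    then show ?thesis
      using True summable_iff by (simp add: Xrv_def f_def[abs_def] g_def[abs_def] rprod_def)
  next
    case False
    then show ?thesis
      using summable_iff by (simp add: Xrv_def f_def[abs_def] g_def[abs_def])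
  qed
qed

lemma Xrv_shift_mem:
  assumes "r w \<noteq> 0" "Xrv T b r w \<in> B" "\<And>y. y \<in> B \<Longrightarrow> (y - b w) / r w \<in> B"
  shows "Xrv T b r (T w) \<in> B"
  using Xrv_shift_cases[of r w T b, OF assms(1)]
proof
  assume "Xrv T b r w = b w + r w * Xrv T b r (T w)"
  then have "Xrv T b r (T w) = (Xrv T b r w - b w) / r w"
    using assms(1) by simp
  then show ?thesis
    using assms(2,3) by simp
qed (use assms(2) in auto)

lemma Xrv_measurable[measurable]:
  assumes [measurable]: "T \<in> M \<rightarrow>\<^sub>M M" "b \<in> borel_measurable M" "r \<in> borel_measurable M"
  shows "Xrv T b r \<in> borel_measurable M"
proof -
  have [measurable]: "(\<lambda>w. rprod T r n w) \<in> borel_measurable M" for n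
    unfolding rprod_def by measurable
  have "Measurable.pred M (\<lambda>w. Cauchy (\<lambda>n. \<Sum>i<n. rprod T r i w * b ((T ^^ i) w)))"
    unfolding pred_def by measurable
  then have [measurable]: "Measurable.pred M (\<lambda>w. summable (\<lambda>n. rprod T r n w * b ((T ^^ n) w)))"
    by (simp add: summable_iff_convergent Cauchy_convergent_iff)
  show ?thesis
    unfolding Xrv_def[abs_def] by measurable
qed

fun affine_comp :: "(real \<times> real) list \<Rightarrow> real \<Rightarrow> real" where
  "affine_comp [] y = y"
| "affine_comp (p # ps) y = affine_comp ps (fst p + snd p * y)"

lemma affine_comp_eq: "\<exists>\<alpha>. affine_comp ps = (\<lambda>y. \<alpha> + prod_list (map snd ps) * y)"
proof (induction ps)
  case Nil
  show ?case by (intro exI[of _ 0]) auto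
next
  case (Cons p ps)
  then obtain \<alpha> where "affine_comp ps = (\<lambda>y. \<alpha> + prod_list (map snd ps) * y)" ..
  then show ?case
    by (intro exI[of _ "\<alpha> + prod_list (map snd ps) * fst p"]) (auto simp: algebra_simps)
qed

lemma affine_comp_measurable: "affine_comp ps \<in> borel_measurable borel"
proof -
  obtain \<alpha> where "affine_comp ps = (\<lambda>y. \<alpha> + prod_list (map snd ps) * y)"
    using affine_comp_eq ..
  then show ?thesis by simp
qed

lemma affine_comp_invertible:
  assumes "ps \<in> lists S" "\<forall>p\<in>S. snd p \<noteq> 0"
  obtains \<alpha> \<beta> where "\<beta> \<noteq> 0" "affine_comp ps = (\<lambda>y. \<alpha> + \<beta> * y)"
proof -
  obtain \<alpha> where "affine_comp ps = (\<lambda>y. \<alpha> + prod_list (map snd ps) * y)"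
    using affine_comp_eq ..
  moreover have "prod_list (map snd ps) \<noteq> 0"
    using assms by (auto simp: prod_list_zero_iff) (metis in_listsD snd_conv)
  ultimately show ?thesis
    using that by blast
qed

definition affine_saturation :: "(real \<times> real) set \<Rightarrow> real set \<Rightarrow> real set" where
  "affine_saturation S B = (\<Union>ps\<in>lists S. affine_comp ps -` B)"

lemma subset_affine_saturation: "B \<subseteq> affine_saturation S B"
  unfolding affine_saturation_def by (auto intro!: bexI[of _ "[]"])

lemma affine_saturation_inverse_closed:
  assumes "p \<in> S" "snd p \<noteq> 0" "y \<in> affine_saturation S B"
  shows "(y - fst p) / snd p \<in> affine_saturation S B"
proof -
  from assms(3) obtain ps where "ps \<in> lists S" "affine_comp ps y \<in> B"
    by (auto simp: affine_saturation_def)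
  moreover have "affine_comp (p # ps) ((y - fst p) / snd p) = affine_comp ps y"
    using assms(2) by simp
  ultimately show ?thesis
    using assms(1) unfolding affine_saturation_def by (intro UN_I[of "p # ps"]) auto
qed

lemma sets_affine_saturation:
  assumes "countable S" "B \<in> sets borel"
  shows "affine_saturation S B \<in> sets borel"
  unfolding affine_saturation_def
  using measurable_sets_borel[OF affine_comp_measurable assms(2)]
  by (intro sets.countable_UN'[OF countable_lists[OF assms(1)]]) auto

lemma null_sets_lborel_affine_vimage:
  fixes \<alpha> \<beta> :: real
  assumes "\<beta> \<noteq> 0" "N \<in> null_sets lborel"
  shows "(\<lambda>y. \<alpha> + \<beta> * y) -` N \<in> null_sets lborel"
proof -
  have N_sets[measurable]: "N \<in> sets borel"
    using assms(2) by auto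
  have "AE y in lborel. \<alpha> + \<beta> * y \<notin> N"
    using AE_borel_affine[OF assms(1), of "\<lambda>x. x \<notin> N"] AE_not_in[OF assms(2)] by simp
  moreover have "(\<lambda>y. \<alpha> + \<beta> * y) \<in> borel_measurable borel"
    by measurable
  then have "(\<lambda>y. \<alpha> + \<beta> * y) -` N \<in> sets borel"
    using measurable_sets_borel N_sets by blast
  ultimately show ?thesis
    by (simp add: AE_iff_null_sets)
qed

lemma null_sets_affine_saturation:
  assumes "countable S" "\<forall>p\<in>S. snd p \<noteq> 0" "N \<in> null_sets lborel"
  shows "affine_saturation S N \<in> null_sets lborel"
  unfolding affine_saturation_def
proof (rule null_sets_UN')
  show "countable (lists S)"
    using assms(1) by (rule countable_lists)
next
  fix ps assume "ps \<in> lists S"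
  then obtain \<alpha> \<beta> where "\<beta> \<noteq> 0" and affine: "affine_comp ps = (\<lambda>y. \<alpha> + \<beta> * y)"
    by (rule affine_comp_invertible[OF _ assms(2)])
  then show "affine_comp ps -` N \<in> null_sets lborel"
    using null_sets_lborel_affine_vimage[OF \<open>\<beta> \<noteq> 0\<close> assms(3)] by (simp only: affine)
qed

lemma countable_affine_saturation_singleton:
  assumes "countable S" "\<forall>p\<in>S. snd p \<noteq> 0"
  shows "countable (affine_saturation S {x})"
  unfolding affine_saturation_def
proof (rule countable_UN)
  show "countable (lists S)"
    using assms(1) by (rule countable_lists)
next
  fix ps assume "ps \<in> lists S"
  then obtain \<alpha> \<beta> where "\<beta> \<noteq> 0" "affine_comp ps = (\<lambda>y. \<alpha> + \<beta> * y)"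
    by (rule affine_comp_invertible[OF _ assms(2)])
  then have "inj (affine_comp ps)"
    by (auto intro!: injI)
  then show "countable (affine_comp ps -` {x})"
    by (intro countable_finite finite_vimageI) auto
qed

lemma pure_type_if_affine_saturations_full:
  fixes \<mu> :: "real measure"
  assumes sets_\<mu>: "sets \<mu> = sets borel" and S: "countable S" "\<forall>p\<in>S. snd p \<noteq> 0"
    and full: "\<And>B. B \<in> sets borel \<Longrightarrow> emeasure \<mu> B \<noteq> 0 \<Longrightarrow>
                  emeasure \<mu> (UNIV - affine_saturation S B) = 0"
  shows "purely_atomic \<mu> \<or> absolutely_continuous lborel \<mu> \<or>
    (continuous_measure \<mu> \<and> singular_lebesgue \<mu>)"
proof (cases "continuous_measure \<mu>")
  case False
  then obtain x where "emeasure \<mu> {x} \<noteq> 0"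
    by (auto simp: continuous_measure_def)
  then have "emeasure \<mu> (UNIV - affine_saturation S {x}) = 0"
    using full by simp
  then have "purely_atomic \<mu>"
    unfolding purely_atomic_def using countable_affine_saturation_singleton[OF S] by blast
  then show ?thesis ..
next
  case True
  show ?thesis
  proof (cases "absolutely_continuous lborel \<mu>")
    case False
    then obtain N where N: "N \<in> null_sets lborel" "N \<notin> null_sets \<mu>"
      by (auto simp: absolutely_continuous_def)
    then have "emeasure \<mu> (UNIV - affine_saturation S N) = 0"
      using full sets_\<mu> by (auto simp: null_sets_def)
    moreover have "affine_saturation S N \<in> null_sets lborel"
      using null_sets_affine_saturation[OF S N(1)] .
    ultimately have "singular_lebesgue \<mu>"
      unfolding singular_lebesgue_def by (auto simp: null_sets_def)
    with True show ?thesis by blast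
  qed simp
qed

lemma distr_Xrv_affine_saturation_full:
  fixes M :: "'a measure" and b r :: "'a \<Rightarrow> real"
  defines "S \<equiv> (\<lambda>w. (b w, r w)) ` space M"
  assumes "prob_space M" "ergodic M T" "b \<in> borel_measurable M" "r \<in> borel_measurable M"
    and r_nonzero: "\<And>w. w \<in> space M \<Longrightarrow> r w \<noteq> 0" and "countable S"
    and B: "B \<in> sets borel" "emeasure (distr M borel (Xrv T b r)) B \<noteq> 0"
  shows "emeasure (distr M borel (Xrv T b r)) (UNIV - affine_saturation S B) = 0"
proof -
  interpret prob_space M by fact
  have T[measurable]: "T \<in> M \<rightarrow>\<^sub>M M"
    using assms(3) by (simp add: ergodic_def measure_preserving_map_def)
  have X[measurable]: "Xrv T b r \<in> borel_measurable M"
    using assms(4,5) by measurable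
  have [measurable]: "affine_saturation S B \<in> sets borel"
    using sets_affine_saturation \<open>countable S\<close> B(1) .
  define E where "E = Xrv T b r -` affine_saturation S B \<inter> space M"
  have E_sets: "E \<in> sets M"
    unfolding E_def by measurable
  have "T w \<in> E" if "w \<in> E" for w
  proof -
    have "w \<in> space M" "(b w, r w) \<in> S"
      using that by (auto simp: E_def S_def)
    then have "Xrv T b r (T w) \<in> affine_saturation S B"
      using that r_nonzero affine_saturation_inverse_closed[of "(b w, r w)" S]
      by (intro Xrv_shift_mem) (auto simp: E_def)
    then show ?thesis
      using measurable_space[OF T \<open>w \<in> space M\<close>] by (simp add: E_def)
  qed
  then have "measure M E = 0 \<or> measure M E = 1"
    using ergodic_forward_invariant[OF assms(3) E_sets] by blast
  moreover have "emeasure M (Xrv T b r -` B \<inter> space M) \<le> emeasure M E"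
    using subset_affine_saturation[of B S] E_sets by (intro emeasure_mono) (auto simp: E_def)
  then have "measure M E \<noteq> 0"
    using B by (auto simp: emeasure_distr emeasure_eq_measure measure_le_0_iff)
  ultimately have "measure M (space M - E) = 0"
    using prob_compl[OF E_sets] by simp
  moreover have "Xrv T b r -` (UNIV - affine_saturation S B) \<inter> space M = space M - E"
    by (auto simp: E_def)
  ultimately show ?thesis
    using E_sets by (simp add: emeasure_distr emeasure_eq_measure)
qed

theorem mainTheorem1:
  fixes M :: "'a measure" and T :: "'a \<Rightarrow> 'a" and b r :: "'a \<Rightarrow> real"
  assumes "prob_space M"
    and "measure_preserving_map M T"
    and "ergodic M T"
    and "b \<in> borel_measurable M" and "r \<in> borel_measurable M"
    and "\<And>w. w \<in> space M \<Longrightarrow> r w > 0"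
    and "countable ((\<lambda>w. (b w, r w)) ` space M)"
    and "\<And>w. w \<in> space M \<Longrightarrow>
           measure M {v \<in> space M. b v = b w \<and> r v = r w} > 0"
    and "integrable M b"
    and "integrable M (\<lambda>w. ln (r w))"
    and "(\<integral>w. ln (r w) \<partial>M) < 0"
  shows "purely_atomic (distr M borel (Xrv T b r))
       \<or> absolutely_continuous lborel (distr M borel (Xrv T b r))
       \<or> (continuous_measure (distr M borel (Xrv T b r))
          \<and> singular_lebesgue (distr M borel (Xrv T b r)))"
proof (rule pure_type_if_affine_saturations_full)
  let ?S = "(\<lambda>w. (b w, r w)) ` space M"
  show "countable ?S" by fact
  show "\<forall>p\<in>?S. snd p \<noteq> 0"
    using assms(6) by fastforce
  show "emeasure (distr M borel (Xrv T b r)) (UNIV - affine_saturation ?S B) = 0"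
    if "B \<in> sets borel" "emeasure (distr M borel (Xrv T b r)) B \<noteq> 0" for B
    using distr_Xrv_affine_saturation_full[OF assms(1,3,4,5) _ assms(7) that] assms(6)
    by fastforce
qed simp

end
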